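(* A pomset automaton $A=\langle Q,F,\delta,\gamma\rangle$ is well-structured if and only if it is $2$-forking, parsimonious, and flat-branching.
   Context: Fix a finite alphabet $\Sigma$. Pomsets are isomorphism classes of finite labelled posets over $\Sigma$; $1$ is the empty pomset; $\mathsf{SP}(\Sigma)$ is the smallest set containing $1$ and the one-element pomsets closed under sequential composition $\cdot$ (disjoint union, all left elements below all right elements) and parallel composition $\parallel$ (disjoint union of orders). A pomset automaton is $A=\langle Q,F,\delta,\gamma\rangle$ with $F\subseteq Q$, $\delta:Q\times\Sigma\to2^Q$, $\gamma:Q\times\mathbb{M}(Q)\to2^Q$ ($\mathbb{M}(Q)$ finite multisets over $Q$, $|\phi|$ the size of $\phi$), each $q$ having finitely many $\phi$ with $\gamma(q,\phi)\ne\emptyset$. The run relation $\to_A$ is the smallest relation with: $q\xrightarrow{1}_A q$; $q\xrightarrow{a}_A q'$ if $q'\in\delta(q,a)$; $q\xrightarrow{U\cdot V}_A q'$ if $q\xrightarrow{U}_A q''\xrightarrow{V}_A q'$; $q\xrightarrow{U_1\parallel\cdots\parallel U_n}_A q'$ if $q'\in\gamma(q,\{\!|q_1,\dots,q_n|\!\})$ and each $q_i\xrightarrow{U_i}_A q_i'$ for some $q_i'\in F$. $L_A(q)=\{U\mid\exists q'\in F.\ q\xrightarrow{U}_A q'\}$. $A$ is well-structured if for all $q,q'\in Q$, $\phi$ with $q'\in\phi$ and $\gamma(q,\phi)\ne\emptyset$: $|\phi|\ge2$, $q'\notin F$, and $\gamma(q',\phi')\cap F=\emptyset$ for all $\phi'$.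 $A$ is $n$-forking if $\gamma(q,\phi)\ne\emptyset$ implies $|\phi|\ge n$. $A$ is parsimonious if whenever $p\in Q$, $q\in\phi$ and $\gamma(p,\phi)\ne\emptyset$, we have $1\notin L_A(q)$. $A$ is flat-branching if whenever $\gamma(q,\phi)\ne\emptyset$ and $p\in\phi$, we have $\gamma(p,\psi)\cap F=\emptyset$ for all $\psi\in\mathbb{M}(Q)$. *)

theory Defs
  imports Main "HOL-Library.Multiset"
begin

text \<open>A labelled poset: a finite carrier of nodes (natural numbers), a strict
  partial order on the carrier, and a labelling.  Labels outside the carrier
  are irrelevant.\<close>

record 'a lposet =
  carrier :: "nat set"
  ord :: "(nat \<times> nat) set"
  lab :: "nat \<Rightarrow> 'a"

definition is_lposet :: "'a lposet \<Rightarrow> bool" where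
  "is_lposet P \<longleftrightarrow> finite (carrier P) \<and> ord P \<subseteq> carrier P \<times> carrier P
     \<and> irrefl (ord P) \<and> trans (ord P)"

definition lp_iso :: "'a lposet \<Rightarrow> 'a lposet \<Rightarrow> bool" where
  "lp_iso P Q \<longleftrightarrow> (\<exists>f. bij_betw f (carrier P) (carrier Q)
     \<and> (\<forall>x\<in>carrier P. \<forall>y\<in>carrier P. (x, y) \<in> ord P \<longleftrightarrow> (f x, f y) \<in> ord Q)
     \<and> (\<forall>x\<in>carrier P. lab Q (f x) = lab P x))"

text \<open>Pomsets are isomorphism classes of labelled posets.\<close>
type_synonym 'a pomset = "'a lposet set"

definition pom :: "'a lposet \<Rightarrow> 'a pomset" where
  "pom P = {Q. is_lposet Q \<and> lp_iso P Q}"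

definition empty_lp :: "'a lposet" where
  "empty_lp = \<lparr>carrier = {}, ord = {}, lab = (\<lambda>_. undefined)\<rparr>"

definition single_lp :: "'a \<Rightarrow> 'a lposet" where
  "single_lp a = \<lparr>carrier = {0}, ord = {}, lab = (\<lambda>_. a)\<rparr>"

definition inL :: "nat \<Rightarrow> nat" where "inL x = 2 * x"
definition inR :: "nat \<Rightarrow> nat" where "inR y = 2 * y + 1"

definition dunion_lab :: "'a lposet \<Rightarrow> 'a lposet \<Rightarrow> nat \<Rightarrow> 'a" where
  "dunion_lab P Q z = (if even z then lab P (z div 2) else lab Q (z div 2))"

definition par_lp :: "'a lposet \<Rightarrow> 'a lposet \<Rightarrow> 'a lposet" where
  "par_lp P Q = \<lparr>carrier = inL ` carrier P \<union> inR ` carrier Q,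
     ord = map_prod inL inL ` ord P \<union> map_prod inR inR ` ord Q,
     lab = dunion_lab P Q\<rparr>"

definition seq_lp :: "'a lposet \<Rightarrow> 'a lposet \<Rightarrow> 'a lposet" where
  "seq_lp P Q = \<lparr>carrier = inL ` carrier P \<union> inR ` carrier Q,
     ord = map_prod inL inL ` ord P \<union> map_prod inR inR ` ord Q
           \<union> (inL ` carrier P) \<times> (inR ` carrier Q),
     lab = dunion_lab P Q\<rparr>"

definition par_list_lp :: "'a lposet list \<Rightarrow> 'a lposet" where
  "par_list_lp Us = foldr par_lp Us empty_lp"

definition one_pom :: "'a pomset" where
  "one_pom = pom empty_lp"

text \<open>States are the elements of the type 'q (so Q = UNIV); the alphabet is a
  finite type 'a.  delta : Q \<times> \<Sigma> \<rightarrow> 2^Q, gamma : Q \<times> M(Q) \<rightarrow> 2^Q.\<close>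

definition pomset_automaton :: "('q \<Rightarrow> 'q multiset \<Rightarrow> 'q set) \<Rightarrow> bool" where
  "pomset_automaton \<gamma> \<longleftrightarrow> (\<forall>q. finite {\<phi>. \<gamma> q \<phi> \<noteq> {}})"

text \<open>The run relation, on labelled posets, closed under isomorphism
  (so that it is really a relation on pomsets).\<close>

inductive run :: "'q set \<Rightarrow> ('q \<Rightarrow> 'a \<Rightarrow> 'q set) \<Rightarrow> ('q \<Rightarrow> 'q multiset \<Rightarrow> 'q set)
    \<Rightarrow> 'q \<Rightarrow> 'a lposet \<Rightarrow> 'q \<Rightarrow> bool"
  for F \<delta> \<gamma> where
  run_one: "is_lposet W \<Longrightarrow> lp_iso W empty_lp \<Longrightarrow> run F \<delta> \<gamma> q W q"
| run_atom: "q' \<in> \<delta> q a \<Longrightarrow> is_lposet W \<Longrightarrow> lp_iso W (single_lp a) \<Longrightarrow> run F \<delta> \<gamma> q W q'"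
| run_seq: "run F \<delta> \<gamma> q U q'' \<Longrightarrow> run F \<delta> \<gamma> q'' V q' \<Longrightarrow> is_lposet W
    \<Longrightarrow> lp_iso W (seq_lp U V) \<Longrightarrow> run F \<delta> \<gamma> q W q'"
| run_par: "q' \<in> \<gamma> q (mset (map fst rs))
    \<Longrightarrow> (\<forall>(qi, Ui, qi') \<in> set rs. run F \<delta> \<gamma> qi Ui qi' \<and> qi' \<in> F)
    \<Longrightarrow> is_lposet W \<Longrightarrow> lp_iso W (par_list_lp (map (fst \<circ> snd) rs))
    \<Longrightarrow> run F \<delta> \<gamma> q W q'"

definition lang :: "'q set \<Rightarrow> ('q \<Rightarrow> 'a \<Rightarrow> 'q set) \<Rightarrow> ('q \<Rightarrow> 'q multiset \<Rightarrow> 'q set)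
    \<Rightarrow> 'q \<Rightarrow> 'a pomset set" where
  "lang F \<delta> \<gamma> q = {pom U | U. \<exists>q'\<in>F. run F \<delta> \<gamma> q U q'}"

definition well_structured :: "'q set \<Rightarrow> ('q \<Rightarrow> 'q multiset \<Rightarrow> 'q set) \<Rightarrow> bool" where
  "well_structured F \<gamma> \<longleftrightarrow>
     (\<forall>q \<phi>. \<gamma> q \<phi> \<noteq> {} \<longrightarrow> size \<phi> \<ge> 2) \<and>
     (\<forall>q q' \<phi>. q' \<in># \<phi> \<and> \<gamma> q \<phi> \<noteq> {} \<longrightarrow> q' \<notin> F \<and> (\<forall>\<phi>'. \<gamma> q' \<phi>' \<inter> F = {}))"

definition forking :: "nat \<Rightarrow> ('q \<Rightarrow> 'q multiset \<Rightarrow> 'q set) \<Rightarrow> bool" where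
  "forking n \<gamma> \<longleftrightarrow> (\<forall>q \<phi>. \<gamma> q \<phi> \<noteq> {} \<longrightarrow> size \<phi> \<ge> n)"

definition parsimonious :: "'q set \<Rightarrow> ('q \<Rightarrow> 'a \<Rightarrow> 'q set) \<Rightarrow> ('q \<Rightarrow> 'q multiset \<Rightarrow> 'q set) \<Rightarrow> bool" where
  "parsimonious F \<delta> \<gamma> \<longleftrightarrow>
     (\<forall>p q \<phi>. q \<in># \<phi> \<and> \<gamma> p \<phi> \<noteq> {} \<longrightarrow> one_pom \<notin> lang F \<delta> \<gamma> q)"

definition flat_branching :: "'q set \<Rightarrow> ('q \<Rightarrow> 'q multiset \<Rightarrow> 'q set) \<Rightarrow> bool" where
  "flat_branching F \<gamma> \<longleftrightarrow>
     (\<forall>q p \<phi>. \<gamma> q \<phi> \<noteq> {} \<and> p \<in># \<phi> \<longrightarrow> (\<forall>\<psi>. \<gamma> p \<psi> \<inter> F = {}))"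

end

theory Submission
  imports Defs
begin

text \<open>A run on the empty pomset can only change state through a fork all of whose
  children accept the empty pomset.  If every fork has a non-accepting child, an
  induction on runs therefore shows that such runs stay put, so \<open>1 \<in> L(q)\<close> holds
  exactly when \<open>q\<close> is accepting.  Parsimony then says precisely that no state
  forked into is accepting, which is the part of well-structuredness not already
  contained in 2-forking and flat-branching.\<close>

lemma lp_iso_refl: "lp_iso U U"
  unfolding lp_iso_def by (rule exI[of _ id]) auto

lemma lp_iso_carrier_empty_iff: "lp_iso P Q \<Longrightarrow> carrier P = {} \<longleftrightarrow> carrier Q = {}"
  unfolding lp_iso_def bij_betw_def by auto

lemma is_lposet_empty_lp: "is_lposet empty_lp"
  unfolding is_lposet_def empty_lp_def by (auto simp: irrefl_def trans_def)

lemma carrier_par_list_lp_empty: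
  "carrier (par_list_lp Us) = {} \<Longrightarrow> U \<in> set Us \<Longrightarrow> carrier U = {}"
  by (induction Us) (auto simp: par_list_lp_def par_lp_def)

lemma run_is_lposet: "run F \<delta> \<gamma> q U q' \<Longrightarrow> is_lposet U"
  by (induction rule: run.induct) auto

lemma pom_eq_one_pom_imp_carrier_empty:
  assumes "is_lposet U" "pom U = one_pom"
  shows "carrier U = {}"
proof -
  have "U \<in> pom U" using assms(1) lp_iso_refl unfolding pom_def by blast
  then have "lp_iso empty_lp U" using assms(2) unfolding pom_def one_pom_def by blast
  then show ?thesis using lp_iso_carrier_empty_iff by (force simp: empty_lp_def)
qed

lemma run_carrier_empty_imp_same_state:
  assumes some_child_nonfinal: "\<And>q \<phi>. \<gamma> q \<phi> \<noteq> {} \<Longrightarrow> \<exists>p\<in>#\<phi>. p \<notin> F"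
  shows "run F \<delta> \<gamma> q U q' \<Longrightarrow> carrier U = {} \<Longrightarrow> q' = q"
proof (induction rule: run.induct)
  case (run_one W q)
  then show ?case by simp
next
  case (run_atom q' q a W)
  then have "carrier (single_lp a) = {}" using lp_iso_carrier_empty_iff by blast
  then show ?case by (simp add: single_lp_def)
next
  case (run_seq q U q'' V q' W)
  then have "carrier (seq_lp U V) = {}" using lp_iso_carrier_empty_iff by blast
  then have "carrier U = {}" "carrier V = {}" by (auto simp: seq_lp_def)
  then show ?case using run_seq by simp
next
  case (run_par q' q rs W)
  have empty: "carrier (par_list_lp (map (fst \<circ> snd) rs)) = {}"
    using run_par lp_iso_carrier_empty_iff by blast
  have children_final: "qi \<in> F" if child: "(qi, Ui, qi') \<in> set rs" for qi Ui qi'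
  proof -
    have "Ui \<in> set (map (fst \<circ> snd) rs)"
      using imageI[OF child, of "fst \<circ> snd"] by simp
    then have "carrier Ui = {}" by (rule carrier_par_list_lp_empty[OF empty])
    moreover have "(carrier Ui = {} \<longrightarrow> qi' = qi) \<and> qi' \<in> F"
      using bspec[OF run_par.IH child] by simp
    ultimately show ?thesis by blast
  qed
  obtain p where "p \<in># mset (map fst rs)" "p \<notin> F"
    using some_child_nonfinal run_par.hyps(1) by blast
  then show ?case using children_final by auto
qed

lemma pom_in_langI: "run F \<delta> \<gamma> q U q' \<Longrightarrow> q' \<in> F \<Longrightarrow> pom U \<in> lang F \<delta> \<gamma> q"
  unfolding lang_def by blast

lemma one_pom_in_lang_if_final: "q \<in> F \<Longrightarrow> one_pom \<in> lang F \<delta> \<gamma> q"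
  unfolding one_pom_def by (rule pom_in_langI[OF run_one[OF is_lposet_empty_lp lp_iso_refl]])

lemma one_pom_in_lang_imp_final:
  assumes "\<And>q \<phi>. \<gamma> q \<phi> \<noteq> {} \<Longrightarrow> \<exists>p\<in>#\<phi>. p \<notin> F"
    and "one_pom \<in> lang F \<delta> \<gamma> q"
  shows "q \<in> F"
proof -
  obtain U q' where U: "pom U = one_pom" "q' \<in> F" "run F \<delta> \<gamma> q U q'"
    using assms(2) unfolding lang_def by blast
  have "carrier U = {}"
    using pom_eq_one_pom_imp_carrier_empty[OF run_is_lposet[OF U(3)] U(1)] .
  then show ?thesis
    using run_carrier_empty_imp_same_state[OF assms(1) U(3)] U(2) by simp
qed

definition fork_children_nonfinal :: "'q set \<Rightarrow> ('q \<Rightarrow> 'q multiset \<Rightarrow> 'q set) \<Rightarrow> bool" where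
  "fork_children_nonfinal F \<gamma> \<longleftrightarrow> (\<forall>q \<phi> p. \<gamma> q \<phi> \<noteq> {} \<and> p \<in># \<phi> \<longrightarrow> p \<notin> F)"

lemma parsimonious_iff_fork_children_nonfinal:
  assumes "forking 1 \<gamma>"
  shows "parsimonious F \<delta> \<gamma> \<longleftrightarrow> fork_children_nonfinal F \<gamma>"
proof
  assume "parsimonious F \<delta> \<gamma>"
  then show "fork_children_nonfinal F \<gamma>"
    using one_pom_in_lang_if_final[of _ F \<delta> \<gamma>]
    unfolding parsimonious_def fork_children_nonfinal_def by blast
next
  assume "fork_children_nonfinal F \<gamma>"
  then have children: "p \<notin> F" if "\<gamma> q \<phi> \<noteq> {}" "p \<in># \<phi>" for q \<phi> p
    using that unfolding fork_children_nonfinal_def by blast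
  have some_child_nonfinal: "\<exists>p\<in>#\<phi>. p \<notin> F" if "\<gamma> q \<phi> \<noteq> {}" for q \<phi>
  proof -
    have "size \<phi> \<ge> 1" using assms that unfolding forking_def by simp
    then obtain p where "p \<in># \<phi>" by (metis multiset_nonemptyE not_one_le_zero size_empty)
    then show ?thesis using children that by blast
  qed
  show "parsimonious F \<delta> \<gamma>"
    unfolding parsimonious_def
  proof (intro allI impI)
    fix p q \<phi>
    assume "q \<in># \<phi> \<and> \<gamma> p \<phi> \<noteq> {}"
    then have "q \<notin> F" using children by blast
    then show "one_pom \<notin> lang F \<delta> \<gamma> q"
      using one_pom_in_lang_imp_final[OF some_child_nonfinal] by (rule contrapos_nn)
  qed
qed

lemma forking_mono: "forking n \<gamma> \<Longrightarrow> m \<le> n \<Longrightarrow> forking m \<gamma>"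
  unfolding forking_def using le_trans by blast

theorem lemma6p5:
  fixes F :: "'q set" and \<delta> :: "'q \<Rightarrow> 'a::finite \<Rightarrow> 'q set"
    and \<gamma> :: "'q \<Rightarrow> 'q multiset \<Rightarrow> 'q set"
  assumes "pomset_automaton \<gamma>"
  shows "well_structured F \<gamma> \<longleftrightarrow>
           forking 2 \<gamma> \<and> parsimonious F \<delta> \<gamma> \<and> flat_branching F \<gamma>"
proof -
  have "well_structured F \<gamma> \<longleftrightarrow>
          forking 2 \<gamma> \<and> fork_children_nonfinal F \<gamma> \<and> flat_branching F \<gamma>"
    unfolding well_structured_def forking_def fork_children_nonfinal_def flat_branching_def
    by blast
  moreover have "forking 2 \<gamma> \<Longrightarrow> parsimonious F \<delta> \<gamma> \<longleftrightarrow> fork_children_nonfinal F \<gamma>"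
    using parsimonious_iff_fork_children_nonfinal forking_mono[of 2 \<gamma> 1] by simp
  ultimately show ?thesis by blast
qed

end
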